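(* For every $d<\omega$ and every $C\subseteq(2^2)^d$, $C$ is a wide right-$\omega$-comb if and only if no two-element subset of $C$ is an up-$1$-comb.
   Context: $2^2=\{0,1\}^2$; $(2^2)^d$ is the set of sequences of length $d$ with entries in $2^2$, $(2^2)^{<d}$ those of length $<d$, $\tau^\frown a$ concatenation; "extends" means has as initial segment. For $A,B\subseteq(2^2)^d$: $A$ is narrowly below $B$ if there are $\tau\in(2^2)^{<d}$, $i<2$ with all elements of $A$ extending $\tau^\frown(i,0)$ and all of $B$ extending $\tau^\frown(i,1)$; $A$ is narrowly to the left of $B$ if there are $\tau$, $j<2$ with all elements of $A$ extending $\tau^\frown(0,j)$ and all of $B$ extending $\tau^\frown(1,j)$; $A$ is widely to the left of $B$ if there is $\sigma\in(2^2)^{<d}$ with all elements of $A$ extending $\sigma^\frown(0,0)$ or $\sigma^\frown(0,1)$ and all of $B$ extending $\sigma^\frown(1,0)$ or $\sigma^\frown(1,1)$. For $n\le\omega$: up-$n$-combs form the smallest class of finite sets containing singletons and containing $A\cup B$ whenever $A,B$ are up-$n$-combs, $|A|\le n$ and $A$ is narrowly below $B$; right-$n$-combs likewise with "narrowly to the left of"; wide right-$n$-combs form the smallest class containing singletons and containing $A\cup B$ whenever $A,B$ are right-$n$-combs, $|A|\le n$ and $A$ is widely to the left of $B$. *)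

theory Defs
  imports Main "HOL-Library.Extended_Nat"
begin

text \<open>The set 2 = {0,1} is represented by bool (False = 0, True = 1); an element of
  2^2 is a pair of bools; an element of (2^2)^d is a list of such pairs of length d.\<close>

type_synonym node = "(bool \<times> bool) list"

definition seqs :: "nat \<Rightarrow> node set" where
  "seqs d = {x. length x = d}"

definition extends :: "node \<Rightarrow> node \<Rightarrow> bool" where
  "extends x \<tau> \<longleftrightarrow> (\<exists>\<rho>. x = \<tau> @ \<rho>)"

definition narrowly_below :: "nat \<Rightarrow> node set \<Rightarrow> node set \<Rightarrow> bool" where
  "narrowly_below d A B \<longleftrightarrow> (\<exists>\<tau> i. length \<tau> < d \<and>
      (\<forall>a\<in>A. extends a (\<tau> @ [(i, False)])) \<and> (\<forall>b\<in>B. extends b (\<tau> @ [(i, True)])))"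

definition narrowly_left :: "nat \<Rightarrow> node set \<Rightarrow> node set \<Rightarrow> bool" where
  "narrowly_left d A B \<longleftrightarrow> (\<exists>\<tau> j. length \<tau> < d \<and>
      (\<forall>a\<in>A. extends a (\<tau> @ [(False, j)])) \<and> (\<forall>b\<in>B. extends b (\<tau> @ [(True, j)])))"

definition widely_left :: "nat \<Rightarrow> node set \<Rightarrow> node set \<Rightarrow> bool" where
  "widely_left d A B \<longleftrightarrow> (\<exists>\<sigma>. length \<sigma> < d \<and>
      (\<forall>a\<in>A. extends a (\<sigma> @ [(False, False)]) \<or> extends a (\<sigma> @ [(False, True)])) \<and>
      (\<forall>b\<in>B. extends b (\<sigma> @ [(True, False)]) \<or> extends b (\<sigma> @ [(True, True)])))"

inductive up_comb :: "nat \<Rightarrow> enat \<Rightarrow> node set \<Rightarrow> bool" for d n where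
  single: "x \<in> seqs d \<Longrightarrow> up_comb d n {x}"
| join: "up_comb d n A \<Longrightarrow> up_comb d n B \<Longrightarrow> enat (card A) \<le> n \<Longrightarrow>
          narrowly_below d A B \<Longrightarrow> up_comb d n (A \<union> B)"

inductive right_comb :: "nat \<Rightarrow> enat \<Rightarrow> node set \<Rightarrow> bool" for d n where
  single: "x \<in> seqs d \<Longrightarrow> right_comb d n {x}"
| join: "right_comb d n A \<Longrightarrow> right_comb d n B \<Longrightarrow> enat (card A) \<le> n \<Longrightarrow>
          narrowly_left d A B \<Longrightarrow> right_comb d n (A \<union> B)"

inductive wide_right_comb :: "nat \<Rightarrow> enat \<Rightarrow> node set \<Rightarrow> bool" for d n where
  single: "x \<in> seqs d \<Longrightarrow> wide_right_comb d n {x}"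
| join: "wide_right_comb d n A \<Longrightarrow> wide_right_comb d n B \<Longrightarrow> enat (card A) \<le> n \<Longrightarrow>
          widely_left d A B \<Longrightarrow> wide_right_comb d n (A \<union> B)"

end

theory Submission
  imports Defs
begin

text \<open>Two distinct sequences of a wide right-\<omega>-comb always first differ in the first coordinate,
  whereas a two-element up-1-comb is exactly a pair that first differs in the second coordinate
  only. Conversely, if no pair of C first differs in the second coordinate only, then at every
  level the first coordinate splits C into at most two blocks, each with a common next entry;
  recursing into the blocks builds C as a wide right-\<omega>-comb.\<close>

definition widely_split :: "node \<Rightarrow> node \<Rightarrow> bool" where
  "widely_split x y \<longleftrightarrow>
     (\<exists>\<sigma> p q. fst p \<noteq> fst q \<and> extends x (\<sigma> @ [p]) \<and> extends y (\<sigma> @ [q]))"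

lemma extends_snoc_iff:
  "extends x (\<sigma> @ [p]) \<longleftrightarrow> extends x \<sigma> \<and> length \<sigma> < length x \<and> x ! length \<sigma> = p"
proof
  assume "extends x (\<sigma> @ [p])"
  then show "extends x \<sigma> \<and> length \<sigma> < length x \<and> x ! length \<sigma> = p"
    unfolding extends_def by (auto simp: nth_append)
next
  assume rhs: "extends x \<sigma> \<and> length \<sigma> < length x \<and> x ! length \<sigma> = p"
  then obtain \<rho> where x: "x = \<sigma> @ \<rho>"
    unfolding extends_def by blast
  with rhs obtain \<rho>' where "\<rho> = p # \<rho>'"
    by (cases \<rho>) auto
  with x show "extends x (\<sigma> @ [p])"
    unfolding extends_def by simp
qed

lemma extends_nth: "extends x \<tau> \<Longrightarrow> i < length \<tau> \<Longrightarrow> x ! i = \<tau> ! i"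
  unfolding extends_def by (auto simp: nth_append)

lemma extends_length_le_imp_eq: "extends x \<sigma> \<Longrightarrow> length x \<le> length \<sigma> \<Longrightarrow> x = \<sigma>"
  unfolding extends_def by auto

lemma widely_split_sym: "widely_split x y \<Longrightarrow> widely_split y x"
  unfolding widely_split_def by metis

lemma widely_split_same_fst_imp_same_snd:
  assumes "widely_split x y" "extends x (\<tau> @ [(i, c)])" "extends y (\<tau> @ [(i, e)])"
  shows "c = e"
proof -
  obtain \<sigma> p q where pq: "fst p \<noteq> fst q" "extends x (\<sigma> @ [p])" "extends y (\<sigma> @ [q])"
    using assms(1) unfolding widely_split_def by blast
  consider "length \<sigma> < length \<tau>" | "length \<sigma> = length \<tau>" | "length \<tau> < length \<sigma>"
    by linarith
  then show ?thesis
  proof cases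
    case 1
    then have "x ! length \<sigma> = y ! length \<sigma>"
      using assms(2,3) extends_snoc_iff extends_nth by metis
    then show ?thesis using pq extends_snoc_iff by metis
  next
    case 2
    then show ?thesis using pq assms(2,3) extends_snoc_iff by (metis fst_conv)
  next
    case 3
    then have "x ! length \<tau> = y ! length \<tau>"
      using pq(2,3) extends_snoc_iff extends_nth by metis
    then show ?thesis using assms(2,3) extends_snoc_iff by (metis prod.inject)
  qed
qed

lemma widely_split_not_narrowly_below: "widely_split x y \<Longrightarrow> \<not> narrowly_below d {x} {y}"
  unfolding narrowly_below_def using widely_split_same_fst_imp_same_snd by blast

lemma widely_left_iff:
  "widely_left d A B \<longleftrightarrow> (\<exists>\<sigma>. length \<sigma> < d \<and>
      (\<forall>a\<in>A. \<exists>c. extends a (\<sigma> @ [(False, c)])) \<and> (\<forall>b\<in>B. \<exists>e. extends b (\<sigma> @ [(True, e)])))"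
  unfolding widely_left_def ex_bool_eq by blast

lemma widely_left_widely_split:
  assumes "widely_left d A B" "a \<in> A" "b \<in> B"
  shows "widely_split a b"
proof -
  obtain \<sigma> c e where "extends a (\<sigma> @ [(False, c)])" "extends b (\<sigma> @ [(True, e)])"
    using assms unfolding widely_left_iff by blast
  then show ?thesis
    unfolding widely_split_def by fastforce
qed

lemma wide_right_comb_pairwise_widely_split:
  "wide_right_comb d n C \<Longrightarrow> pairwise widely_split C"
proof (induction rule: wide_right_comb.induct)
  case (single x)
  then show ?case by simp
next
  case (join A B)
  have "widely_split a b" "widely_split b a" if "a \<in> A" "b \<in> B" for a b
    using widely_left_widely_split[OF \<open>widely_left d A B\<close> that] widely_split_sym by blast+
  with join.IH show ?case
    unfolding pairwise_def by (metis Un_iff)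
qed

lemma narrowly_below_mono:
  "narrowly_below d A B \<Longrightarrow> A' \<subseteq> A \<Longrightarrow> B' \<subseteq> B \<Longrightarrow> narrowly_below d A' B'"
  unfolding narrowly_below_def by blast

lemma up_comb_nonempty: "up_comb d n A \<Longrightarrow> A \<noteq> {}"
  by (induction rule: up_comb.induct) auto

lemma up_comb_1_pair_narrowly_below:
  assumes "up_comb d 1 {x, y}" "x \<noteq> y"
  shows "narrowly_below d {x} {y} \<or> narrowly_below d {y} {x}"
  using assms(1)
proof cases
  case (single z)
  then show ?thesis using assms(2) by (simp add: doubleton_eq_iff)
next
  case (join A B)
  have "A \<subseteq> {x, y}"
    using join(1) by blast
  then have "finite A"
    by (rule finite_subset) simp
  moreover have "A \<noteq> {}" "card A \<le> 1"
    using join(2,4) up_comb_nonempty by (auto simp: one_enat_def)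
  ultimately have "card A = 1"
    using card_gt_0_iff[of A] by linarith
  then obtain a where A: "A = {a}"
    by (rule card_1_singletonE)
  have "a \<in> {x, y}" "x \<in> {a} \<union> B" "y \<in> {a} \<union> B"
    using join(1) unfolding A by blast+
  then consider "a = x" "y \<in> B" | "a = y" "x \<in> B"
    using assms(2) by blast
  then show ?thesis
  proof cases
    case 1
    have "narrowly_below d {x} {y}"
      by (rule narrowly_below_mono[OF join(5)]) (use 1 A in auto)
    then show ?thesis ..
  next
    case 2
    have "narrowly_below d {y} {x}"
      by (rule narrowly_below_mono[OF join(5)]) (use 2 A in auto)
    then show ?thesis ..
  qed
qed

lemma up_comb_pair:
  assumes "x \<in> seqs d" "y \<in> seqs d" "narrowly_below d {x} {y}" "1 \<le> n"
  shows "up_comb d n {x, y}"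
proof -
  have "enat (card {x}) = 1"
    by (simp add: one_enat_def)
  then have "enat (card {x}) \<le> n"
    using assms(4) by (rule ssubst)
  then have "up_comb d n ({x} \<union> {y})"
    by (rule up_comb.join[OF up_comb.single[OF assms(1)] up_comb.single[OF assms(2)] _ assms(3)])
  then show ?thesis
    unfolding insert_is_Un[of x "{y}"] .
qed

lemma entry_eq_if_not_narrowly_below:
  assumes "length \<sigma> < d" "extends x (\<sigma> @ [p])" "extends y (\<sigma> @ [q])" "fst p = fst q"
    and "\<not> narrowly_below d {x} {y}" "\<not> narrowly_below d {y} {x}"
  shows "p = q"
proof (rule ccontr)
  assume "p \<noteq> q"
  moreover obtain i c e where "p = (i, c)" "q = (i, e)"
    using assms(4) by (cases p, cases q) auto
  ultimately show False
    using assms(1,2,3,5,6) unfolding narrowly_below_def by (cases c) auto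
qed

lemma wide_right_comb_Un:
  assumes "A \<noteq> {} \<Longrightarrow> wide_right_comb d \<infinity> A" "B \<noteq> {} \<Longrightarrow> wide_right_comb d \<infinity> B"
    and "widely_left d A B" "A \<union> B \<noteq> {}"
  shows "wide_right_comb d \<infinity> (A \<union> B)"
proof -
  consider "A = {}" | "B = {}" | "A \<noteq> {}" "B \<noteq> {}"
    by blast
  then show ?thesis
  proof cases
    case 3
    then show ?thesis
      using assms by (intro wide_right_comb.join) simp_all
  qed (use assms in auto)
qed

lemma narrowly_below_free_imp_wide_right_comb:
  assumes "C \<subseteq> seqs d" "C \<noteq> {}" "\<forall>x\<in>C. extends x \<sigma>"
    and "\<forall>x\<in>C. \<forall>y\<in>C. \<not> narrowly_below d {x} {y}"
  shows "wide_right_comb d \<infinity> C"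
  using assms
proof (induction "d - length \<sigma>" arbitrary: \<sigma> C rule: less_induct)
  case less
  show ?case
  proof (cases "length \<sigma> < d")
    case False
    then have "C = {\<sigma>}" "\<sigma> \<in> seqs d"
      using less.prems(1-3) extends_length_le_imp_eq unfolding seqs_def by fastforce+
    then show ?thesis
      by (simp add: wide_right_comb.single)
  next
    case True
    define k where "k = length \<sigma>"
    have next_entry: "extends x (\<sigma> @ [x ! k])" if "x \<in> C" for x
      using that less.prems(1,3) True unfolding k_def extends_snoc_iff seqs_def by auto
    define block where "block b = {x \<in> C. fst (x ! k) = b}" for b
    have block_comb: "wide_right_comb d \<infinity> (block b)" if nonempty: "block b \<noteq> {}" for b
    proof -
      obtain x0 where x0: "x0 \<in> block b"
        using nonempty by blast
      have "extends x (\<sigma> @ [x0 ! k])" if x: "x \<in> block b" for x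
      proof -
        have "x ! k = x0 ! k"
          using entry_eq_if_not_narrowly_below[OF True next_entry next_entry] x x0 less.prems(4)
          unfolding block_def by simp
        then show ?thesis
          using next_entry[of x] x unfolding block_def by simp
      qed
      moreover have "block b \<subseteq> seqs d" "d - length (\<sigma> @ [x0 ! k]) < d - length \<sigma>"
        using less.prems(1) True unfolding block_def by auto
      moreover have "\<forall>x\<in>block b. \<forall>y\<in>block b. \<not> narrowly_below d {x} {y}"
        using less.prems(4) unfolding block_def by blast
      ultimately show ?thesis
        using less.hyps nonempty by blast
    qed
    have "extends x (\<sigma> @ [(b, snd (x ! k))])" if "x \<in> block b" for x b
      using that next_entry unfolding block_def by (metis (mono_tags) mem_Collect_eq prod.collapse)
    then have "widely_left d (block False) (block True)"
      unfolding widely_left_iff using True by blast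
    moreover have "C = block False \<union> block True"
      unfolding block_def by auto
    ultimately show ?thesis
      using wide_right_comb_Un block_comb less.prems(2) by metis
  qed
qed

lemma wide_right_comb_no_up_comb_pair:
  assumes "wide_right_comb d n C" "S \<subseteq> C" "card S = 2"
  shows "\<not> up_comb d 1 S"
proof
  assume up: "up_comb d 1 S"
  from assms(3) obtain x y where xy: "x \<noteq> y" "S = {x, y}"
    by (meson card_2_iff)
  then have "widely_split x y" "widely_split y x"
    using wide_right_comb_pairwise_widely_split[OF assms(1)] assms(2) by (auto intro: pairwiseD)
  moreover have "narrowly_below d {x} {y} \<or> narrowly_below d {y} {x}"
    using up_comb_1_pair_narrowly_below up xy by simp
  ultimately show False
    using widely_split_not_narrowly_below by blast
qed

theorem lemma4p5:
  fixes d :: nat and C :: "node set"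
  assumes "C \<subseteq> seqs d" and "C \<noteq> {}"
  shows "wide_right_comb d \<infinity> C \<longleftrightarrow> (\<forall>S\<subseteq>C. card S = 2 \<longrightarrow> \<not> up_comb d 1 S)"
proof
  assume "wide_right_comb d \<infinity> C"
  then show "\<forall>S\<subseteq>C. card S = 2 \<longrightarrow> \<not> up_comb d 1 S"
    using wide_right_comb_no_up_comb_pair by blast
next
  assume no_pair: "\<forall>S\<subseteq>C. card S = 2 \<longrightarrow> \<not> up_comb d 1 S"
  have "\<not> narrowly_below d {x} {y}" if xy: "x \<in> C" "y \<in> C" for x y
  proof
    assume below: "narrowly_below d {x} {y}"
    then have "card {x, y} = 2"
      unfolding narrowly_below_def extends_def by auto
    moreover have "up_comb d 1 {x, y}"
      using up_comb_pair[OF _ _ below] xy assms(1) by auto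
    ultimately show False
      using no_pair xy by simp
  qed
  then show "wide_right_comb d \<infinity> C"
    using narrowly_below_free_imp_wide_right_comb[of C d "[]"] assms
    unfolding extends_def by simp
qed

end
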